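(* For every graph $G$ of order $n\geq 2$ with vertex connectivity $\kappa$, $\operatorname{th}_{\operatorname{H}}^*(G)\geq\left\lceil\frac{n+\kappa}{2}\right\rceil$. In particular, if $G$ is connected then $\operatorname{th}_{\operatorname{H}}^*(G)\geq\left\lceil\frac{n+1}{2}\right\rceil$.
   Context: All graphs are finite, simple and undirected; vertex connectivity follows the usual convention ($\kappa(K_n)=n-1$, $\kappa=0$ for disconnected graphs). Hopping color change rule: a blue vertex $v$ may force a white vertex $w$ to become blue if $v$ has not previously performed a force and every neighbor of $v$ is blue. For an initial blue set $B$, a chronological list of forces of $B$ is a sequence of such forces applied one at a time until no further force is possible; its underlying unordered set is a set of forces of $B$. $B$ is a hopping forcing set if some chronological list of forces of $B$ turns all vertices blue; $\operatorname{H}(G)$ is the minimum size of one. For a set of forces $\mathcal F$ of $B$, let $\mathcal F^{(0)}=B$ and for $t\geq1$ let $\mathcal F^{(t)}$ be the set of vertices $w\notin U_{t-1}:=\bigcup_{i=0}^{t-1}\mathcal F^{(i)}$ for which there is $(v\to w)\in\mathcal F$ with $v\in U_{t-1}$ and all neighbors of $v$ in $U_{t-1}$. $\operatorname{pt}_{\operatorname{H}}(G;\mathcal F)$ is the least $t$ with $\bigcup_{i=0}^t\mathcal F^{(i)}=V(G)$ ($\infty$ if none); $\operatorname{pt}_{\operatorname{H}}(G;B)$ is the minimum over sets of forces $\mathcal F$ of $B$ ($\infty$ if $B$ is not a hopping forcing set). $\operatorname{pt}_{\operatorname{H}}(G,k)=\min\{\operatorname{pt}_{\operatorname{H}}(G;B):|B|=k\}$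 and $\operatorname{th}_{\operatorname{H}}^*(G)=\min_{\operatorname{H}(G)\leq k<n}\{k\cdot\operatorname{pt}_{\operatorname{H}}(G,k)\}$, with the conventions $\min\emptyset=\infty$ and $k\cdot\infty=\infty$. *)

theory Defs
  imports Main "HOL-Library.Extended_Nat"
begin

definition simple_graph :: "'a set \<Rightarrow> ('a \<Rightarrow> 'a \<Rightarrow> bool) \<Rightarrow> bool" where
  "simple_graph V E \<longleftrightarrow> finite V \<and> (\<forall>u v. E u v \<longrightarrow> u \<in> V \<and> v \<in> V)
     \<and> (\<forall>u v. E u v \<longrightarrow> E v u) \<and> (\<forall>v. \<not> E v v)"

definition nbrs :: "'a set \<Rightarrow> ('a \<Rightarrow> 'a \<Rightarrow> bool) \<Rightarrow> 'a \<Rightarrow> 'a set" where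
  "nbrs V E v = {u \<in> V. E v u}"

definition connected_on :: "'a set \<Rightarrow> ('a \<Rightarrow> 'a \<Rightarrow> bool) \<Rightarrow> 'a set \<Rightarrow> bool" where
  "connected_on V E W \<longleftrightarrow>
     (\<forall>u\<in>W. \<forall>v\<in>W. (\<lambda>x y. x \<in> W \<and> y \<in> W \<and> E x y)\<^sup>*\<^sup>* u v)"

(* vertex connectivity: least number of vertices whose removal leaves a disconnected graph
   or at most one vertex (so kappa(K_n) = n-1, kappa = 0 for disconnected graphs) *)
definition vertex_connectivity :: "'a set \<Rightarrow> ('a \<Rightarrow> 'a \<Rightarrow> bool) \<Rightarrow> nat" where
  "vertex_connectivity V E =
     Min {card S | S. S \<subseteq> V \<and> (card (V - S) \<le> 1 \<or> \<not> connected_on V E (V - S))}"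

(* v may hop-force w in state (blue set S, set U of vertices that already forced) *)
definition can_force :: "'a set \<Rightarrow> ('a \<Rightarrow> 'a \<Rightarrow> bool) \<Rightarrow> 'a set \<Rightarrow> 'a set \<Rightarrow> 'a \<Rightarrow> 'a \<Rightarrow> bool" where
  "can_force V E S U v w \<longleftrightarrow> v \<in> S \<and> v \<notin> U \<and> w \<in> V \<and> w \<notin> S \<and> nbrs V E v \<subseteq> S"

fun valid_forces :: "'a set \<Rightarrow> ('a \<Rightarrow> 'a \<Rightarrow> bool) \<Rightarrow> 'a set \<Rightarrow> 'a set \<Rightarrow> ('a \<times> 'a) list \<Rightarrow> bool" where
  "valid_forces V E S U [] = True"
| "valid_forces V E S U ((v, w) # fs) =
     (can_force V E S U v w \<and> valid_forces V E (insert w S) (insert v U) fs)"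

definition blue_after :: "'a set \<Rightarrow> ('a \<times> 'a) list \<Rightarrow> 'a set" where
  "blue_after B fs = B \<union> snd ` set fs"

definition used_after :: "('a \<times> 'a) list \<Rightarrow> 'a set" where
  "used_after fs = fst ` set fs"

definition chron_list :: "'a set \<Rightarrow> ('a \<Rightarrow> 'a \<Rightarrow> bool) \<Rightarrow> 'a set \<Rightarrow> ('a \<times> 'a) list \<Rightarrow> bool" where
  "chron_list V E B fs \<longleftrightarrow> B \<subseteq> V \<and> valid_forces V E B {} fs
     \<and> \<not> (\<exists>v w. can_force V E (blue_after B fs) (used_after fs) v w)"

definition sets_of_forces :: "'a set \<Rightarrow> ('a \<Rightarrow> 'a \<Rightarrow> bool) \<Rightarrow> 'a set \<Rightarrow> ('a \<times> 'a) set set" where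
  "sets_of_forces V E B = {set fs | fs. chron_list V E B fs}"

definition hopping_forcing_set :: "'a set \<Rightarrow> ('a \<Rightarrow> 'a \<Rightarrow> bool) \<Rightarrow> 'a set \<Rightarrow> bool" where
  "hopping_forcing_set V E B \<longleftrightarrow> (\<exists>fs. chron_list V E B fs \<and> blue_after B fs = V)"

definition hopping_number :: "'a set \<Rightarrow> ('a \<Rightarrow> 'a \<Rightarrow> bool) \<Rightarrow> nat" where
  "hopping_number V E = Min {card B | B. hopping_forcing_set V E B}"

fun blue_by_time :: "'a set \<Rightarrow> ('a \<Rightarrow> 'a \<Rightarrow> bool) \<Rightarrow> 'a set \<Rightarrow> ('a \<times> 'a) set \<Rightarrow> nat \<Rightarrow> 'a set" where
  "blue_by_time V E B F 0 = B"
| "blue_by_time V E B F (Suc t) =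
     blue_by_time V E B F t \<union>
     {w. w \<notin> blue_by_time V E B F t \<and>
         (\<exists>v. (v, w) \<in> F \<and> v \<in> blue_by_time V E B F t \<and>
              nbrs V E v \<subseteq> blue_by_time V E B F t)}"

definition pt_forces :: "'a set \<Rightarrow> ('a \<Rightarrow> 'a \<Rightarrow> bool) \<Rightarrow> 'a set \<Rightarrow> ('a \<times> 'a) set \<Rightarrow> enat" where
  "pt_forces V E B F =
     (if \<exists>t. blue_by_time V E B F t = V then enat (LEAST t. blue_by_time V E B F t = V) else \<infinity>)"

definition pt_set :: "'a set \<Rightarrow> ('a \<Rightarrow> 'a \<Rightarrow> bool) \<Rightarrow> 'a set \<Rightarrow> enat" where
  "pt_set V E B =
     (if hopping_forcing_set V E B then (INF F \<in> sets_of_forces V E B. pt_forces V E B F) else \<infinity>)"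

(* minimum over the empty set is \<infinity> (Inf {} = \<infinity> in enat) *)
definition pt_k :: "'a set \<Rightarrow> ('a \<Rightarrow> 'a \<Rightarrow> bool) \<Rightarrow> nat \<Rightarrow> enat" where
  "pt_k V E k = (INF B \<in> {B. B \<subseteq> V \<and> card B = k}. pt_set V E B)"

definition th_star :: "'a set \<Rightarrow> ('a \<Rightarrow> 'a \<Rightarrow> bool) \<Rightarrow> enat" where
  "th_star V E = (INF k \<in> {k. hopping_number V E \<le> k \<and> k < card V}.
      (if pt_k V E k = \<infinity> then \<infinity> else enat k * pt_k V E k))"

end

theory Submission
  imports Defs Complex_Main
begin

text \<open>Let \<open>B\<close> be a hopping forcing set with a set of forces that colours \<open>G\<close> in \<open>p \<ge> 1\<close>
rounds. The first force is made by a vertex all of whose neighbours lie in \<open>B\<close>, and deleting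
those neighbours isolates it, so \<open>\<kappa> < |B|\<close>. Since the forcers are distinct and every vertex
forced so far has already used up its own forcer, each round forces at most \<open>|B|\<close> vertices,
so \<open>n \<le> |B|(p + 1)\<close>; for \<open>p \<ge> 2\<close> this gives \<open>n + \<kappa> \<le> |B|(p + 2) \<le> 2|B|p\<close>. If \<open>p = 1\<close>,
the forcers \<open>X \<subseteq> B\<close> of the \<open>n - |B|\<close> white vertices have all their neighbours in \<open>B\<close>, so
\<open>B - X\<close> separates \<open>X\<close> from \<open>V - B\<close> and \<open>\<kappa> \<le> |B| - (n - |B|)\<close>.\<close>

lemma INF_eq_enatE:
  fixes f :: "'b \<Rightarrow> enat"
  assumes "(INF x\<in>A. f x) = enat p"
  obtains x where "x \<in> A" "f x = enat p"
proof -
  have "A \<noteq> {}"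
    using assms by (auto simp: Inf_enat_def)
  then have "(INF x\<in>A. f x) \<in> f ` A"
    by (meson ex_in_conv imageI wellorder_InfI)
  then show thesis
    using assms that by force
qed

subsection \<open>Chronological lists of forces\<close>

lemma valid_forces_distinct:
  assumes "valid_forces V E S U fs"
  shows "distinct (map fst fs)" "distinct (map snd fs)"
proof -
  have "distinct (map fst fs) \<and> fst ` set fs \<inter> U = {} \<and>
        distinct (map snd fs) \<and> snd ` set fs \<inter> S = {}"
    using assms by (induction V E S U fs rule: valid_forces.induct) (auto simp: can_force_def)
  then show "distinct (map fst fs)" "distinct (map snd fs)"
    by auto
qed

lemma chron_list_inj_on_forces:
  assumes "chron_list V E B fs"
  shows "inj_on fst (set fs)" "inj_on snd (set fs)"
  using valid_forces_distinct[of V E B "{}" fs] assms by (simp_all add: chron_list_def distinct_map)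

subsection \<open>Propagation by rounds\<close>

lemma subset_blue_by_time: "B \<subseteq> blue_by_time V E B F t"
  by (induction t) auto

lemma blue_by_time_subset: "blue_by_time V E B F t \<subseteq> B \<union> snd ` F"
  by (induction t) (auto intro: rev_image_eqI)

lemma blue_by_time_forcer:
  assumes "w \<in> blue_by_time V E B F t" "w \<notin> B"
  obtains v where "(v, w) \<in> F" "v \<in> blue_by_time V E B F t"
  using assms by (induction t) auto

lemma blue_by_time_Suc_subset:
  "blue_by_time V E B F (Suc t) \<subseteq> blue_by_time V E B F t \<union>
     snd ` {q \<in> F. fst q \<in> blue_by_time V E B F t \<and> snd q \<notin> blue_by_time V E B F t}"
  by (auto simp: image_iff)

lemma blue_by_time_stuck:
  assumes "blue_by_time V E B F 1 = B"
  shows "blue_by_time V E B F t = B"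
  using assms by (induction t) auto

lemma card_blue_by_time_le:
  assumes "finite F" "finite B" "inj_on fst F" "inj_on snd F"
  shows "card (blue_by_time V E B F t) \<le> card B * (t + 1)"
proof (induction t)
  case 0
  then show ?case by simp
next
  case (Suc t)
  define U where "U = blue_by_time V E B F t"
  define Q where "Q = {q \<in> F. fst q \<in> U}"
  define New where "New = {q \<in> F. fst q \<in> U \<and> snd q \<notin> U}"
  define Old where "Old = {q \<in> F. snd q \<in> U - B}"
  have "finite U"
    using blue_by_time_subset[of V E B F t] assms(1,2) unfolding U_def
    by (meson finite_Un finite_imageI finite_subset)
  have "B \<subseteq> U"
    unfolding U_def by (rule subset_blue_by_time)
  have "Old \<subseteq> Q"
  proof
    fix q assume q: "q \<in> Old"
    then have "q \<in> F"
      by (simp add: Old_def)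
    from q have "snd q \<in> U" "snd q \<notin> B"
      by (auto simp: Old_def)
    then obtain v where v: "(v, snd q) \<in> F" "v \<in> U"
      unfolding U_def by (rule blue_by_time_forcer)
    have "q = (v, snd q)"
      using inj_onD[OF assms(4) _ \<open>q \<in> F\<close> v(1)] by simp
    with v show "q \<in> Q"
      unfolding Q_def by (metis fst_conv mem_Collect_eq)
  qed
  have "New \<subseteq> Q" "New \<inter> Old = {}" "finite Q"
    using assms(1) unfolding New_def Old_def Q_def by auto
  have "card New + card Old = card (New \<union> Old)"
    using finite_subset[OF \<open>New \<subseteq> Q\<close> \<open>finite Q\<close>] finite_subset[OF \<open>Old \<subseteq> Q\<close> \<open>finite Q\<close>]
      \<open>New \<inter> Old = {}\<close> by (rule card_Un_disjoint[symmetric])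
  also have "\<dots> \<le> card Q"
    using \<open>finite Q\<close> \<open>New \<subseteq> Q\<close> \<open>Old \<subseteq> Q\<close> by (intro card_mono) auto
  also have "card Q = card (fst ` Q)"
    using inj_on_subset[OF assms(3)] by (intro card_image[symmetric]) (auto simp: Q_def)
  also have "\<dots> \<le> card U"
    using \<open>finite U\<close> by (intro card_mono) (auto simp: Q_def)
  finally have "card New + card Old \<le> card U" .
  moreover have "card Old = card U - card B"
  proof -
    have "inj_on snd Old"
      using assms(4) by (rule inj_on_subset) (auto simp: Old_def)
    then have "card Old = card (snd ` Old)"
      by (rule card_image[symmetric])
    also have "snd ` Old = U - B"
      using blue_by_time_subset[of V E B F t] unfolding Old_def U_def by auto
    also have "card (U - B) = card U - card B"
      using assms(2) \<open>B \<subseteq> U\<close> by (rule card_Diff_subset)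
    finally show ?thesis .
  qed
  moreover have "card B \<le> card U"
    using \<open>B \<subseteq> U\<close> \<open>finite U\<close> by (rule card_mono[rotated])
  ultimately have "card New \<le> card B"
    by linarith
  have "card (blue_by_time V E B F (Suc t)) \<le> card (U \<union> snd ` New)"
    using blue_by_time_Suc_subset[of V E B F t] \<open>finite U\<close> assms(1)
    unfolding U_def New_def by (intro card_mono) auto
  also have "\<dots> \<le> card U + card (snd ` New)"
    by (rule card_Un_le)
  also have "\<dots> \<le> card U + card New"
    using assms(1) by (simp add: New_def card_image_le)
  finally show ?case
    using \<open>card New \<le> card B\<close> Suc.IH unfolding U_def by simp
qed

subsection \<open>Vertex connectivity\<close>

lemma vertex_connectivity_le_card:
  assumes "finite V" "S \<subseteq> V" "card (V - S) \<le> 1 \<or> \<not> connected_on V E (V - S)"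
  shows "vertex_connectivity V E \<le> card S"
  unfolding vertex_connectivity_def
proof (rule Min_le)
  show "finite {card S |S. S \<subseteq> V \<and> (card (V - S) \<le> 1 \<or> \<not> connected_on V E (V - S))}"
    by (rule finite_subset[of _ "card ` Pow V"]) (use assms(1) in auto)
qed (use assms in auto)

lemma vertex_connectivity_le_separator:
  assumes "finite V" "S \<subseteq> V" "X \<subseteq> V - S" "x \<in> X" "w \<in> V - S - X"
    and closed: "\<And>y. y \<in> X \<Longrightarrow> nbrs V E y \<subseteq> X \<union> S"
  shows "vertex_connectivity V E \<le> card S"
proof -
  let ?R = "\<lambda>a b. a \<in> V - S \<and> b \<in> V - S \<and> E a b"
  have "b \<in> X" if "?R\<^sup>*\<^sup>* x b" for b
    using that
  proof (induction rule: rtranclp_induct)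
    case base
    then show ?case using \<open>x \<in> X\<close> .
  next
    case (step a b)
    then show ?case
      using closed[of a] by (auto simp: nbrs_def)
  qed
  then have "\<not> connected_on V E (V - S)"
    using assms(3-5) unfolding connected_on_def by blast
  then show ?thesis
    using vertex_connectivity_le_card assms(1,2) by blast
qed

lemma vertex_connectivity_le_degree:
  assumes "simple_graph V E" "v \<in> V"
  shows "vertex_connectivity V E \<le> card (nbrs V E v)"
proof -
  let ?S = "nbrs V E v"
  have "finite V" "v \<notin> ?S" "?S \<subseteq> V"
    using assms(1) by (auto simp: simple_graph_def nbrs_def)
  show ?thesis
  proof (cases "V - ?S \<subseteq> {v}")
    case True
    then have "card (V - ?S) \<le> 1"
      using card_mono[of "{v}" "V - ?S"] by simp
    then show ?thesis
      using vertex_connectivity_le_card \<open>finite V\<close> \<open>?S \<subseteq> V\<close> by blast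
  next
    case False
    then obtain w where "w \<in> V - ?S - {v}"
      by blast
    then show ?thesis
      using \<open>finite V\<close> \<open>?S \<subseteq> V\<close> \<open>v \<notin> ?S\<close> assms(2)
      by (intro vertex_connectivity_le_separator[of V ?S "{v}" v w]) auto
  qed
qed

lemma vertex_connectivity_less_card:
  assumes "simple_graph V E" "B \<subseteq> V" "v \<in> B" "nbrs V E v \<subseteq> B"
  shows "vertex_connectivity V E < card B"
proof -
  have "finite B"
    using assms(1,2) finite_subset by (auto simp: simple_graph_def)
  have "nbrs V E v \<subseteq> B - {v}"
    using assms(1,4) by (auto simp: simple_graph_def nbrs_def)
  then have "card (nbrs V E v) \<le> card (B - {v})"
    using \<open>finite B\<close> by (intro card_mono) auto
  also have "\<dots> < card B"
    using \<open>finite B\<close> assms(3) by (rule card_Diff1_less)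
  finally show ?thesis
    using vertex_connectivity_le_degree[OF assms(1), of v] assms(2,3) by auto
qed

lemma vertex_connectivity_pos:
  assumes "finite V" "card V \<ge> 2" "connected_on V E V"
  shows "vertex_connectivity V E \<ge> 1"
proof -
  let ?M = "{card S |S. S \<subseteq> V \<and> (card (V - S) \<le> 1 \<or> \<not> connected_on V E (V - S))}"
  have "finite ?M"
    by (rule finite_subset[of _ "card ` Pow V"]) (use assms(1) in auto)
  moreover have "?M \<noteq> {}"
    by auto
  moreover have "m \<ge> 1" if "m \<in> ?M" for m
  proof -
    obtain S where S: "S \<subseteq> V" "card (V - S) \<le> 1 \<or> \<not> connected_on V E (V - S)" "m = card S"
      using \<open>m \<in> ?M\<close> by blast
    then have "S \<noteq> {}"
      using assms(2,3) by auto
    then show ?thesis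
      using S(1,3) assms(1) by (simp add: Suc_leI card_gt_0_iff finite_subset)
  qed
  ultimately show ?thesis
    unfolding vertex_connectivity_def by simp
qed

lemma card_add_vertex_connectivity_le_one_round:
  assumes "simple_graph V E" "B \<subseteq> V" "B \<noteq> V" "inj_on fst F"
    and coloured: "blue_by_time V E B F 1 = V"
  shows "card V + vertex_connectivity V E \<le> 2 * card B"
proof -
  define W where "W = V - B"
  have "finite V"
    using assms(1) by (simp add: simple_graph_def)
  have "\<forall>w\<in>W. \<exists>v. (v, w) \<in> F \<and> v \<in> B \<and> nbrs V E v \<subseteq> B"
  proof
    fix w assume "w \<in> W"
    then have "w \<in> blue_by_time V E B F (Suc 0)" "w \<notin> B"
      using coloured by (auto simp: W_def)
    then show "\<exists>v. (v, w) \<in> F \<and> v \<in> B \<and> nbrs V E v \<subseteq> B"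
      by auto
  qed
  then obtain f where f: "\<And>w. w \<in> W \<Longrightarrow> (f w, w) \<in> F \<and> f w \<in> B \<and> nbrs V E (f w) \<subseteq> B"
    by (meson bchoice)
  define X where "X = f ` W"
  have "inj_on f W"
  proof (rule inj_onI)
    fix w w' assume "w \<in> W" "w' \<in> W" "f w = f w'"
    then show "w = w'"
      using f[of w] f[of w'] inj_onD[OF assms(4)] by fastforce
  qed
  then have "card X = card V - card B"
    using assms(2) \<open>finite V\<close> by (simp add: X_def W_def card_image card_Diff_subset finite_subset)
  have "X \<subseteq> B"
    using f by (auto simp: X_def)
  obtain w where "w \<in> W"
    using assms(2,3) by (auto simp: W_def)
  have "vertex_connectivity V E \<le> card (B - X)"
  proof (rule vertex_connectivity_le_separator)
    show "f w \<in> X" "w \<in> V - (B - X) - X"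
      using \<open>w \<in> W\<close> \<open>X \<subseteq> B\<close> by (auto simp: X_def W_def)
    show "nbrs V E y \<subseteq> X \<union> (B - X)" if "y \<in> X" for y
      using that f by (auto simp: X_def)
  qed (use \<open>finite V\<close> assms(2) \<open>X \<subseteq> B\<close> in auto)
  also have "card (B - X) = card B - card X"
    using \<open>X \<subseteq> B\<close> assms(2) \<open>finite V\<close> by (meson card_Diff_subset finite_subset)
  finally have "vertex_connectivity V E \<le> card B - card X" .
  moreover have "card X \<le> card B"
    using \<open>X \<subseteq> B\<close> assms(2) \<open>finite V\<close> by (meson card_mono finite_subset)
  ultimately show ?thesis
    using \<open>card X = card V - card B\<close> by linarith
qed

lemma card_add_vertex_connectivity_le:
  assumes graph: "simple_graph V E" and "B \<subseteq> V" "card B < card V"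
    and forces: "finite F" "inj_on fst F" "inj_on snd F"
    and coloured: "blue_by_time V E B F p = V"
  shows "card V + vertex_connectivity V E \<le> 2 * (card B * p)"
proof -
  have "finite B"
    using graph \<open>B \<subseteq> V\<close> by (auto simp: simple_graph_def finite_subset)
  have "B \<noteq> V"
    using \<open>card B < card V\<close> by auto
  have "blue_by_time V E B F 1 \<noteq> B"
  proof
    assume "blue_by_time V E B F 1 = B"
    from blue_by_time_stuck[OF this, of p] have "V = B"
      unfolding coloured .
    with \<open>B \<noteq> V\<close> show False
      by simp
  qed
  then obtain w where "w \<in> blue_by_time V E B F (Suc 0) - B"
    using subset_blue_by_time[of B V E F 1] by (auto simp only: One_nat_def)
  then obtain v where "v \<in> B" "nbrs V E v \<subseteq> B"
    by auto
  then have "vertex_connectivity V E < card B"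
    by (rule vertex_connectivity_less_card[OF graph \<open>B \<subseteq> V\<close>])
  have "p \<noteq> 0"
  proof
    assume "p = 0"
    from coloured have "B = V"
      unfolding \<open>p = 0\<close> by simp
    with \<open>B \<noteq> V\<close> show False ..
  qed
  show ?thesis
  proof (cases "p = 1")
    case True
    from coloured have "blue_by_time V E B F 1 = V"
      unfolding True .
    with card_add_vertex_connectivity_le_one_round[OF graph \<open>B \<subseteq> V\<close> \<open>B \<noteq> V\<close> forces(2)]
    show ?thesis
      using True by simp
  next
    case False
    have "card V \<le> card B * (p + 1)"
      using card_blue_by_time_le[OF forces(1) \<open>finite B\<close> forces(2,3), of V E p]
      unfolding coloured .
    moreover have "card B * (p + 2) \<le> card B * (2 * p)"
      using \<open>p \<noteq> 0\<close> False by (intro mult_le_mono2) simp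
    ultimately show ?thesis
      using \<open>vertex_connectivity V E < card B\<close> by (simp add: algebra_simps)
  qed
qed

lemma pt_k_eq_enatE:
  assumes "pt_k V E k = enat p"
  obtains B fs where "B \<subseteq> V" "card B = k" "chron_list V E B fs"
    "blue_by_time V E B (set fs) p = V"
proof -
  from assms obtain B where "B \<in> {B. B \<subseteq> V \<and> card B = k}" and pt_B: "pt_set V E B = enat p"
    unfolding pt_k_def by (rule INF_eq_enatE)
  then have B: "B \<subseteq> V" "card B = k"
    by simp_all
  from pt_B have "(INF F \<in> sets_of_forces V E B. pt_forces V E B F) = enat p"
    unfolding pt_set_def by (simp split: if_splits)
  then obtain F where "F \<in> sets_of_forces V E B" and pt_F: "pt_forces V E B F = enat p"
    by (rule INF_eq_enatE)
  then obtain fs where fs: "chron_list V E B fs" "F = set fs"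
    by (auto simp: sets_of_forces_def)
  from pt_F have "\<exists>t. blue_by_time V E B F t = V"
    unfolding pt_forces_def by (auto split: if_splits)
  with pt_F have "p = (LEAST t. blue_by_time V E B F t = V)"
    unfolding pt_forces_def by simp
  moreover from \<open>\<exists>t. blue_by_time V E B F t = V\<close>
  have "blue_by_time V E B F (LEAST t. blue_by_time V E B F t = V) = V"
    by (rule LeastI_ex)
  ultimately have "blue_by_time V E B F p = V"
    by simp
  with that[OF B fs(1)] fs(2) show thesis
    by simp
qed

lemma card_add_vertex_connectivity_le_pt_k:
  assumes "simple_graph V E" "k < card V" "pt_k V E k = enat p"
  shows "card V + vertex_connectivity V E \<le> 2 * (k * p)"
proof -
  obtain B fs where B: "B \<subseteq> V" "card B = k" and fs: "chron_list V E B fs"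
    "blue_by_time V E B (set fs) p = V"
    using assms(3) by (rule pt_k_eq_enatE)
  show ?thesis
    using card_add_vertex_connectivity_le[OF assms(1) B(1) _ finite_set
        chron_list_inj_on_forces[OF fs(1)] fs(2)] B(2) assms(2)
    by simp
qed

lemma enat_le_th_star:
  assumes "\<And>k p. k < card V \<Longrightarrow> pt_k V E k = enat p \<Longrightarrow> c \<le> k * p"
  shows "enat c \<le> th_star V E"
  unfolding th_star_def
proof (rule INF_greatest)
  fix k assume "k \<in> {k. hopping_number V E \<le> k \<and> k < card V}"
  then show "enat c \<le> (if pt_k V E k = \<infinity> then \<infinity> else enat k * pt_k V E k)"
    using assms[of k] by (cases "pt_k V E k") auto
qed

theorem proposition4p8:
  fixes V :: "'a set" and E :: "'a \<Rightarrow> 'a \<Rightarrow> bool"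
  assumes "simple_graph V E" and "card V \<ge> 2"
  shows "th_star V E \<ge> enat (nat \<lceil>(real (card V) + real (vertex_connectivity V E)) / 2\<rceil>)
    \<and> (connected_on V E V \<longrightarrow> th_star V E \<ge> enat (nat \<lceil>(real (card V) + 1) / 2\<rceil>))"
proof -
  let ?\<kappa> = "vertex_connectivity V E"
  have "enat (nat \<lceil>(real (card V) + real ?\<kappa>) / 2\<rceil>) \<le> th_star V E"
  proof (rule enat_le_th_star)
    fix k p assume "k < card V" "pt_k V E k = enat p"
    then have "real (card V + ?\<kappa>) \<le> real (2 * (k * p))"
      using card_add_vertex_connectivity_le_pt_k[OF assms(1)] by (simp only: of_nat_le_iff)
    then show "nat \<lceil>(real (card V) + real ?\<kappa>) / 2\<rceil> \<le> k * p"
      by (simp add: nat_ceiling_le_eq)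
  qed
  moreover have "\<lceil>(real (card V) + 1) / 2\<rceil> \<le> \<lceil>(real (card V) + real ?\<kappa>) / 2\<rceil>"
    if "connected_on V E V"
    using vertex_connectivity_pos[OF _ assms(2) that] assms(1)
    by (intro ceiling_mono) (simp add: simple_graph_def)
  ultimately show ?thesis
    by (meson enat_ord_simps(1) nat_mono order_trans)
qed

end
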